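(* Suppose $f$ is $L_f$-smooth, $\mathbf{c}$ is $L_c$-smooth, and there exist $C,G>0$ such that for all $\mathbf{x}$: $\|\nabla f(\mathbf{x})\|\le G$, all subgradients of $h$ and $g$ have norm at most $G$, $\|\nabla\mathbf{c}(\mathbf{x})\|\le G$, $\|\mathbf{c}(\mathbf{x})\|\le C$. Then for any $k\ge0$, $\|\mathbf{u}^{k+1}\|^2\le3\|\mathbf{e}^k\|^2+3(L_{\rho_k}^2+(\mu_k\beta)^{-2})\|\mathbf{w}^{k+1}-\mathbf{w}^k\|^2$, and $\max\{\|\mathbf{u}^{k+1}\|^2,\|\mathbf{x}^{k+1}-\mathrm{prox}_{\mu_kg}(\mathbf{z}^k)\|^2\}\le3\|\mathbf{e}^k\|^2+\bigl(3(L_{\rho_k}^2+(\mu_k\beta)^{-2})+\beta^{-2}\bigr)\|\mathbf{w}^{k+1}-\mathbf{w}^k\|^2$.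
   Context: Problem: $\min f(\mathbf{x})+h(\mathbf{x})-g(\mathbf{x})$ s.t. $\mathbf{c}(\mathbf{x})=\mathbf{0}$, $f=\mathbb{E}_\xi[\mathbf{f}(\cdot,\xi)]$, $h,g$ proper closed convex. $Q_\rho(\mathbf{x})=f(\mathbf{x})+\frac{\rho}{2}\|\mathbf{c}(\mathbf{x})\|^2$, $L_\rho$-smooth with $L_\rho=\rho(\rho_0^{-1}L_f+G^2+CL_c)$. Iterates $\mathbf{w}^k=(\mathbf{x}^k,\mathbf{z}^k)$ of MoSSP-P or MoSSP-R: $\mathbf{x}^{k+1}=\mathrm{prox}_{\mu_kh}(\mathbf{z}^k-\mu_k\mathbf{G}^k)$, $\mathbf{z}^{k+1}=\mathbf{z}^k-\beta(\mathrm{prox}_{\mu_kg}(\mathbf{z}^k)-\mathbf{x}^{k+1})$, with $\mathbf{G}^k$ the Polyak-momentum estimator $\mathbf{S}^k$ or recursive-momentum estimator $\mathbf{D}^k$ of $\nabla Q_{\rho_k}(\mathbf{x}^k)$; $\mathbf{e}^k:=\mathbf{G}^k-\nabla Q_{\rho_k}(\mathbf{x}^k)$; $\mathbf{u}^{k+1}:=\nabla Q_{\rho_k}(\mathbf{x}^{k+1})-\mathbf{G}^k+\mu_k^{-1}(\mathrm{prox}_{\mu_kg}(\mathbf{z}^k)-\mathbf{x}^{k+1})$, which lies in $\partial(Q_{\rho_k}+h)(\mathbf{x}^{k+1})-\partial g(\mathrm{prox}_{\mu_kg}(\mathbf{z}^k))$. *)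

theory Defs
  imports "HOL-Analysis.Analysis" "HOL-Library.Extended_Real"
begin

definition proper_fun :: "('a::euclidean_space \<Rightarrow> ereal) \<Rightarrow> bool" where
  "proper_fun h \<longleftrightarrow> (\<forall>x. h x \<noteq> -\<infinity>) \<and> (\<exists>x. h x \<noteq> \<infinity>)"

definition closed_fun :: "('a::euclidean_space \<Rightarrow> ereal) \<Rightarrow> bool" where
  "closed_fun h \<longleftrightarrow> (\<forall>x X. X \<longlonglongrightarrow> x \<longrightarrow> h x \<le> liminf (\<lambda>n. h (X n)))"

definition convex_fun :: "('a::euclidean_space \<Rightarrow> ereal) \<Rightarrow> bool" where
  "convex_fun h \<longleftrightarrow> (\<forall>x y t. 0 \<le> t \<and> t \<le> 1 \<longrightarrow>
      h ((1 - t) *\<^sub>R x + t *\<^sub>R y) \<le> ereal (1 - t) * h x + ereal t * h y)"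

definition subdiff :: "('a::euclidean_space \<Rightarrow> ereal) \<Rightarrow> 'a \<Rightarrow> 'a set" where
  "subdiff h x = {s. h x \<noteq> \<infinity> \<and> (\<forall>y. h x + ereal (s \<bullet> (y - x)) \<le> h y)}"

definition prox :: "real \<Rightarrow> ('a::euclidean_space \<Rightarrow> ereal) \<Rightarrow> 'a \<Rightarrow> 'a" where
  "prox \<mu> h v = (THE p. \<forall>y. h p + ereal ((norm (p - v))\<^sup>2 / (2 * \<mu>))
                              \<le> h y + ereal ((norm (y - v))\<^sup>2 / (2 * \<mu>)))"

text \<open>Penalty function Q_rho(x) = f(x) + rho/2 ||c(x)||^2 and its smoothness constant.\<close>

definition Qpen :: "('a::euclidean_space \<Rightarrow> real) \<Rightarrow> ('a \<Rightarrow> 'b::euclidean_space) \<Rightarrow> real \<Rightarrow> 'a \<Rightarrow> real" where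
  "Qpen f c \<rho> x = f x + \<rho> / 2 * (norm (c x))\<^sup>2"

definition Lrho :: "real \<Rightarrow> real \<Rightarrow> real \<Rightarrow> real \<Rightarrow> real \<Rightarrow> real \<Rightarrow> real" where
  "Lrho \<rho>0 Lf G C Lc \<rho> = \<rho> * (Lf / \<rho>0 + G\<^sup>2 + C * Lc)"

end

theory Submission
  imports Defs
begin

text \<open>Write \<open>x, z\<close> for the current iterate, \<open>x', z'\<close> for the next one, \<open>p = prox\<^sub>\<mu>\<^sub>g(z)\<close>
  and \<open>Q = Q\<^sub>\<rho>\<close>. The gradient \<open>\<nabla>Q(y) = \<nabla>f(y) + \<rho> Dc(y)\<^sup>T c(y)\<close> is
  \<open>(L\<^sub>f + \<rho> (G\<^sup>2 + C L\<^sub>c))\<close>-Lipschitz, a constant bounded by \<open>L\<^sub>\<rho>\<close> because \<open>\<rho> \<ge> \<rho>\<^sub>0\<close>.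
  The \<open>z\<close>-update gives \<open>p - x' = -(z' - z) / \<beta>\<close>, hence
  \<open>u = (\<nabla>Q(x') - \<nabla>Q(x)) - e - (z' - z) / (\<mu> \<beta>)\<close>, and \<open>(a + b + c)\<^sup>2 \<le> 3 (a\<^sup>2 + b\<^sup>2 + c\<^sup>2)\<close>
  yields the first bound; the second adds \<open>\<parallel>x' - p\<parallel>\<^sup>2 = \<beta>\<^sup>-\<^sup>2 \<parallel>z' - z\<parallel>\<^sup>2\<close>.\<close>

lemma sum3_power2_le: "((a::real) + b + c)\<^sup>2 \<le> 3 * (a\<^sup>2 + b\<^sup>2 + c\<^sup>2)"
proof -
  have "0 \<le> (a - b)\<^sup>2 + (b - c)\<^sup>2 + (a - c)\<^sup>2" by simp
  then show ?thesis by (simp add: power2_eq_square algebra_simps)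
qed

lemma lipschitz_const_nonneg:
  fixes F :: "'a::euclidean_space \<Rightarrow> 'b::real_normed_vector"
  assumes "\<And>y y'. norm (F y - F y') \<le> L * norm (y - y')"
  shows "L \<ge> 0"
proof -
  obtain b :: 'a where "b \<in> Basis" using nonempty_Basis by blast
  then have "norm (b - 0) > 0" by auto
  moreover have "0 \<le> L * norm (b - 0)"
    using assms[of b 0] norm_ge_zero[of "F b - F 0"] by linarith
  ultimately show ?thesis by (simp add: zero_le_mult_iff)
qed

lemma norm_le_if_inner_le:
  fixes d :: "'a::euclidean_space"
  assumes "\<And>v. \<bar>d \<bullet> v\<bar> \<le> K * norm v"
  shows "norm d \<le> K"
proof (cases "d = 0")
  case True
  obtain b :: 'a where "b \<in> Basis" using nonempty_Basis by blast
  then show ?thesis using True assms[of b] by simp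
next
  case False
  have "norm d * norm d \<le> K * norm d"
    using assms[of d] by (simp add: power2_norm_eq_inner[symmetric] power2_eq_square)
  then show ?thesis using False by simp
qed

lemma abs_inner_blinfun_le: "\<bar>a \<bullet> blinfun_apply D v\<bar> \<le> norm a * norm D * norm v"
proof -
  have "\<bar>a \<bullet> D v\<bar> \<le> norm a * norm (D v)" by (rule Cauchy_Schwarz_ineq2)
  also have "\<dots> \<le> norm a * (norm D * norm v)" by (intro mult_left_mono norm_blinfun) simp
  finally show ?thesis by (simp add: mult.assoc)
qed

lemma has_derivative_bounded_imp_lipschitz:
  fixes c :: "'a::euclidean_space \<Rightarrow> 'b::euclidean_space"
  assumes "\<And>y. (c has_derivative blinfun_apply (Dc y)) (at y)"
    and "\<And>y. norm (Dc y) \<le> G"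
  shows "norm (c y - c y') \<le> G * norm (y - y')"
proof (rule differentiable_bound[where S = UNIV and f' = "\<lambda>y. blinfun_apply (Dc y)"])
  show "\<And>x. x \<in> UNIV \<Longrightarrow> (c has_derivative blinfun_apply (Dc x)) (at x within UNIV)"
    using assms(1) by simp
  show "\<And>x. x \<in> UNIV \<Longrightarrow> onorm (blinfun_apply (Dc x)) \<le> G"
    using assms(2) by (simp add: norm_blinfun.rep_eq[symmetric])
qed auto

lemma gderiv_Qpen_inner:
  fixes f :: "'a::euclidean_space \<Rightarrow> real" and c :: "'a \<Rightarrow> 'b::euclidean_space"
  assumes f_grad: "GDERIV f y :> gf"
    and c_deriv: "(c has_derivative blinfun_apply D) (at y)"
    and Q_grad: "GDERIV (Qpen f c r) y :> q"
  shows "q \<bullet> v = gf \<bullet> v + r * (c y \<bullet> D v)"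
proof -
  have Qpen_eq: "Qpen f c r = (\<lambda>x. f x + r / 2 * (c x \<bullet> c x))"
    by (auto simp: Qpen_def fun_eq_iff power2_norm_eq_inner)
  have f_deriv: "(f has_derivative (\<lambda>h. h \<bullet> gf)) (at y)"
    using f_grad by (simp add: gderiv_def)
  have "(Qpen f c r has_derivative (\<lambda>h. h \<bullet> gf + r / 2 * (c y \<bullet> D h + D h \<bullet> c y))) (at y)"
    unfolding Qpen_eq by (intro derivative_intros f_deriv c_deriv)
  moreover have "(Qpen f c r has_derivative (\<lambda>h. h \<bullet> q)) (at y)"
    using Q_grad by (simp add: gderiv_def)
  ultimately have "(\<lambda>h. h \<bullet> gf + r / 2 * (c y \<bullet> D h + D h \<bullet> c y)) = (\<lambda>h. h \<bullet> q)"
    by (rule has_derivative_unique)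
  from fun_cong[OF this, of v] show ?thesis by (simp add: inner_commute)
qed

lemma gderiv_Qpen_lipschitz:
  fixes f :: "'a::euclidean_space \<Rightarrow> real" and c :: "'a \<Rightarrow> 'b::euclidean_space"
  assumes f_grad: "\<And>y. GDERIV f y :> gf y"
    and f_smooth: "\<And>y y'. norm (gf y - gf y') \<le> Lf * norm (y - y')"
    and c_deriv: "\<And>y. (c has_derivative blinfun_apply (Dc y)) (at y)"
    and c_smooth: "\<And>y y'. norm (Dc y - Dc y') \<le> Lc * norm (y - y')"
    and Dc_bound: "\<And>y. norm (Dc y) \<le> G"
    and c_bound: "\<And>y. norm (c y) \<le> C"
    and Q_grad: "\<And>y. GDERIV (Qpen f c r) y :> gQ y"
    and r: "r \<ge> 0"
  shows "norm (gQ y - gQ y') \<le> (Lf + r * (G\<^sup>2 + C * Lc)) * norm (y - y')"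
proof (rule norm_le_if_inner_le)
  \<comment> \<open>Testing against an arbitrary \<open>v\<close> keeps the adjoint of \<open>Dc y\<close> out of the argument.\<close>
  fix v
  define n where "n = norm (y - y')"
  have G: "G \<ge> 0" by (meson Dc_bound norm_ge_zero order_trans)
  have C: "C \<ge> 0" by (meson c_bound norm_ge_zero order_trans)
  have inner_split: "(gQ y - gQ y') \<bullet> v
      = (gf y - gf y') \<bullet> v + r * ((c y - c y') \<bullet> Dc y v + c y' \<bullet> (Dc y - Dc y') v)"
    using gderiv_Qpen_inner[OF f_grad c_deriv Q_grad, of y v]
      gderiv_Qpen_inner[OF f_grad c_deriv Q_grad, of y' v]
    by (simp add: inner_diff_left inner_diff_right blinfun.diff_left algebra_simps)
  have bound_f: "\<bar>(gf y - gf y') \<bullet> v\<bar> \<le> Lf * n * norm v"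
    using Cauchy_Schwarz_ineq2[of "gf y - gf y'" v] f_smooth[of y y'] unfolding n_def
    by (meson mult_right_mono norm_ge_zero order_trans)
  have "\<bar>(c y - c y') \<bullet> Dc y v\<bar> \<le> norm (c y - c y') * norm (Dc y) * norm v"
    by (rule abs_inner_blinfun_le)
  also have "\<dots> \<le> (G * n) * G * norm v"
    using has_derivative_bounded_imp_lipschitz[OF c_deriv Dc_bound, of y y'] Dc_bound[of y] G
    unfolding n_def by (intro mult_right_mono mult_mono) auto
  finally have bound_c: "\<bar>(c y - c y') \<bullet> Dc y v\<bar> \<le> G\<^sup>2 * n * norm v"
    by (simp add: power2_eq_square algebra_simps)
  have "\<bar>c y' \<bullet> (Dc y - Dc y') v\<bar> \<le> norm (c y') * norm (Dc y - Dc y') * norm v"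
    by (rule abs_inner_blinfun_le)
  also have "\<dots> \<le> C * (Lc * n) * norm v"
    using c_bound[of y'] c_smooth[of y y'] C unfolding n_def by (intro mult_right_mono mult_mono) auto
  finally have bound_Dc: "\<bar>c y' \<bullet> (Dc y - Dc y') v\<bar> \<le> C * Lc * n * norm v"
    by (simp add: algebra_simps)
  have "\<bar>(c y - c y') \<bullet> Dc y v + c y' \<bullet> (Dc y - Dc y') v\<bar> \<le> G\<^sup>2 * n * norm v + C * Lc * n * norm v"
    using abs_triangle_ineq[of "(c y - c y') \<bullet> Dc y v"] bound_c bound_Dc by linarith
  then have "r * \<bar>(c y - c y') \<bullet> Dc y v + c y' \<bullet> (Dc y - Dc y') v\<bar> \<le> r * ((G\<^sup>2 + C * Lc) * n * norm v)"
    using r by (intro mult_left_mono) (simp_all add: algebra_simps)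
  then have "\<bar>(gQ y - gQ y') \<bullet> v\<bar> \<le> Lf * n * norm v + r * ((G\<^sup>2 + C * Lc) * n * norm v)"
    unfolding inner_split using bound_f r
      abs_triangle_ineq[of "(gf y - gf y') \<bullet> v" "r * ((c y - c y') \<bullet> Dc y v + c y' \<bullet> (Dc y - Dc y') v)"]
    by (simp add: abs_mult)
  then show "\<bar>(gQ y - gQ y') \<bullet> v\<bar> \<le> (Lf + r * (G\<^sup>2 + C * Lc)) * norm (y - y') * norm v"
    by (simp add: n_def algebra_simps)
qed

lemma Lrho_ge:
  assumes "0 < \<rho>0" "\<rho>0 \<le> \<rho>" "0 \<le> Lf"
  shows "Lf + \<rho> * (G\<^sup>2 + C * Lc) \<le> Lrho \<rho>0 Lf G C Lc \<rho>"
proof -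
  have "Lf = \<rho>0 * (Lf / \<rho>0)" using assms(1) by simp
  also have "\<dots> \<le> \<rho> * (Lf / \<rho>0)" using assms by (intro mult_right_mono) auto
  finally show ?thesis unfolding Lrho_def by (simp add: algebra_simps)
qed

lemma residual_norm_bound:
  fixes q q' x x' z z' p e :: "'a::real_normed_vector"
  assumes lip: "norm (q' - q) \<le> L * norm (x' - x)" and L: "L \<ge> 0"
    and \<mu>: "\<mu> > 0" and \<beta>: "\<beta> > 0"
    and z_step: "z' = z - \<beta> *\<^sub>R (p - x')"
  shows "(norm ((q' - q) - e + inverse \<mu> *\<^sub>R (p - x')))\<^sup>2
    \<le> 3 * (norm e)\<^sup>2 + 3 * (L\<^sup>2 + inverse ((\<mu> * \<beta>)\<^sup>2)) * (norm ((x', z') - (x, z)))\<^sup>2"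
proof -
  define dx where "dx = norm (x' - x)"
  define dz where "dz = norm (z' - z)"
  define m where "m = inverse (\<mu> * \<beta>)"
  have m: "m \<ge> 0" using \<mu> \<beta> by (simp add: m_def)
  have "inverse \<mu> *\<^sub>R (p - x') = - m *\<^sub>R (z' - z)"
    using z_step \<beta> by (simp add: m_def)
  then have "norm (inverse \<mu> *\<^sub>R (p - x')) = m * dz"
    using m by (simp add: dz_def)
  then have "norm ((q' - q) - e + inverse \<mu> *\<^sub>R (p - x')) \<le> L * dx + norm e + m * dz"
    using lip norm_triangle_ineq[of "(q' - q) - e" "inverse \<mu> *\<^sub>R (p - x')"]
      norm_triangle_ineq4[of "q' - q" e] unfolding dx_def by linarith
  then have "(norm ((q' - q) - e + inverse \<mu> *\<^sub>R (p - x')))\<^sup>2 \<le> (L * dx + norm e + m * dz)\<^sup>2"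
    by (intro power_mono) auto
  also have "\<dots> \<le> 3 * ((L * dx)\<^sup>2 + (norm e)\<^sup>2 + (m * dz)\<^sup>2)"
    by (rule sum3_power2_le)
  also have "\<dots> \<le> 3 * (norm e)\<^sup>2 + 3 * (L\<^sup>2 + m\<^sup>2) * (dx\<^sup>2 + dz\<^sup>2)"
    by (simp add: algebra_simps power_mult_distrib)
  finally show ?thesis
    by (simp add: dx_def dz_def m_def norm_Pair power_inverse power_mult_distrib)
qed

lemma step_gap_bound:
  fixes x x' z z' p :: "'a::real_normed_vector"
  assumes \<beta>: "\<beta> > 0" and z_step: "z' = z - \<beta> *\<^sub>R (p - x')"
  shows "(norm (x' - p))\<^sup>2 \<le> inverse (\<beta>\<^sup>2) * (norm ((x', z') - (x, z)))\<^sup>2"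
proof -
  have "x' - p = inverse \<beta> *\<^sub>R (z' - z)" using z_step \<beta> by simp
  then have "(norm (x' - p))\<^sup>2 = inverse (\<beta>\<^sup>2) * (norm (z' - z))\<^sup>2"
    using \<beta> by (simp add: power_mult_distrib power_inverse)
  also have "\<dots> \<le> inverse (\<beta>\<^sup>2) * (norm ((x', z') - (x, z)))\<^sup>2"
    by (intro mult_left_mono) (auto simp: norm_Pair)
  finally show ?thesis .
qed

theorem lemmaC3:
  fixes f :: "'a::euclidean_space \<Rightarrow> real"
    and gf :: "'a \<Rightarrow> 'a"
    and c :: "'a \<Rightarrow> 'b::euclidean_space"
    and Dc :: "'a \<Rightarrow> ('a \<Rightarrow>\<^sub>L 'b)"
    and h g :: "'a \<Rightarrow> ereal"
    and gQ :: "real \<Rightarrow> 'a \<Rightarrow> 'a"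
    and x z Gest :: "nat \<Rightarrow> 'a"
    and \<mu> \<rho> :: "nat \<Rightarrow> real"
    and \<beta> \<rho>0 Lf Lc C G :: real
    and k :: nat
  assumes f_grad: "\<And>y. GDERIV f y :> gf y"
    and f_smooth: "\<And>y y'. norm (gf y - gf y') \<le> Lf * norm (y - y')"
    and c_deriv: "\<And>y. (c has_derivative blinfun_apply (Dc y)) (at y)"
    and c_smooth: "\<And>y y'. norm (Dc y - Dc y') \<le> Lc * norm (y - y')"
    and CG_pos: "C > 0" "G > 0"
    and gf_bound: "\<And>y. norm (gf y) \<le> G"
    and h_sub_bound: "\<And>y s. s \<in> subdiff h y \<Longrightarrow> norm s \<le> G"
    and g_sub_bound: "\<And>y s. s \<in> subdiff g y \<Longrightarrow> norm s \<le> G"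
    and Dc_bound: "\<And>y. norm (Dc y) \<le> G"
    and c_bound: "\<And>y. norm (c y) \<le> C"
    and h_pcc: "proper_fun h" "closed_fun h" "convex_fun h"
    and g_pcc: "proper_fun g" "closed_fun g" "convex_fun g"
    and gQ_grad: "\<And>r y. GDERIV (Qpen f c r) y :> gQ r y"
    and rho0_pos: "\<rho>0 > 0"
    and rho_ge: "\<And>j. \<rho> j \<ge> \<rho>0"
    and mu_pos: "\<And>j. \<mu> j > 0"
    and beta_pos: "\<beta> > 0"
    and x_upd: "\<And>j. x (Suc j) = prox (\<mu> j) h (z j - \<mu> j *\<^sub>R Gest j)"
    and z_upd: "\<And>j. z (Suc j) = z j - \<beta> *\<^sub>R (prox (\<mu> j) g (z j) - x (Suc j))"
  shows "(let e = Gest k - gQ (\<rho> k) (x k);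
              u = gQ (\<rho> k) (x (Suc k)) - Gest k
                  + inverse (\<mu> k) *\<^sub>R (prox (\<mu> k) g (z k) - x (Suc k));
              L = Lrho \<rho>0 Lf G C Lc (\<rho> k);
              dw = (norm ((x (Suc k), z (Suc k)) - (x k, z k)))\<^sup>2
          in (norm u)\<^sup>2 \<le> 3 * (norm e)\<^sup>2 + 3 * (L\<^sup>2 + inverse ((\<mu> k * \<beta>)\<^sup>2)) * dw
           \<and> max ((norm u)\<^sup>2) ((norm (x (Suc k) - prox (\<mu> k) g (z k)))\<^sup>2)
               \<le> 3 * (norm e)\<^sup>2 + (3 * (L\<^sup>2 + inverse ((\<mu> k * \<beta>)\<^sup>2)) + inverse (\<beta>\<^sup>2)) * dw)"
proof -
  define L where "L = Lrho \<rho>0 Lf G C Lc (\<rho> k)"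
  have Lf: "Lf \<ge> 0" by (rule lipschitz_const_nonneg[OF f_smooth])
  have Lc: "Lc \<ge> 0" by (rule lipschitz_const_nonneg[OF c_smooth])
  have \<rho>: "\<rho> k \<ge> 0" using rho_ge[of k] rho0_pos by linarith
  have L_ge: "Lf + \<rho> k * (G\<^sup>2 + C * Lc) \<le> L"
    unfolding L_def using rho0_pos rho_ge Lf by (rule Lrho_ge)
  have "0 \<le> Lf + \<rho> k * (G\<^sup>2 + C * Lc)"
    using Lf Lc \<rho> CG_pos by (intro add_nonneg_nonneg mult_nonneg_nonneg) auto
  with L_ge have L: "L \<ge> 0" by linarith
  have "norm (gQ (\<rho> k) (x (Suc k)) - gQ (\<rho> k) (x k)) \<le> L * norm (x (Suc k) - x k)"
    using gderiv_Qpen_lipschitz[OF f_grad f_smooth c_deriv c_smooth Dc_bound c_bound gQ_grad \<rho>]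
      L_ge by (meson mult_right_mono norm_ge_zero order_trans)
  from residual_norm_bound[OF this L mu_pos beta_pos z_upd, of "Gest k - gQ (\<rho> k) (x k)"]
  have u_bound: "(norm (gQ (\<rho> k) (x (Suc k)) - Gest k + inverse (\<mu> k) *\<^sub>R (prox (\<mu> k) g (z k) - x (Suc k))))\<^sup>2
    \<le> 3 * (norm (Gest k - gQ (\<rho> k) (x k)))\<^sup>2
      + 3 * (L\<^sup>2 + inverse ((\<mu> k * \<beta>)\<^sup>2)) * (norm ((x (Suc k), z (Suc k)) - (x k, z k)))\<^sup>2"
    by (simp only: diff_diff_eq2 diff_add_cancel)
  have gap_bound: "(norm (x (Suc k) - prox (\<mu> k) g (z k)))\<^sup>2
    \<le> inverse (\<beta>\<^sup>2) * (norm ((x (Suc k), z (Suc k)) - (x k, z k)))\<^sup>2"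
    by (rule step_gap_bound[OF beta_pos z_upd])
  have nonneg: "0 \<le> 3 * (L\<^sup>2 + inverse ((\<mu> k * \<beta>)\<^sup>2)) * (norm ((x (Suc k), z (Suc k)) - (x k, z k)))\<^sup>2"
    "0 \<le> inverse (\<beta>\<^sup>2) * (norm ((x (Suc k), z (Suc k)) - (x k, z k)))\<^sup>2"
    "0 \<le> 3 * (norm (Gest k - gQ (\<rho> k) (x k)))\<^sup>2"
    by simp_all
  show ?thesis
    unfolding Let_def L_def[symmetric] max.bounded_iff distrib_right
    by (intro conjI) (use u_bound gap_bound nonneg in linarith)+
qed

end
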